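(* Let $L\ge2$ be an integer. Let $\bm{\xi}=\{\xi_{M,U}:(M,U)\in\mathcal{M}\times\mathcal{U},\ 0\le c(M,U)\le1\}$ be real constants with $|\xi_{M,U}|\le1$. Suppose $\eta_2$ and $\{\delta_2(N)\}_{N=1,2,\dots}$ satisfy $\exp[-N\delta_2(N)]\le\eta_2$ for all $N\ge 1$. If the random variables $(N,m^N,u^N,x^N)$ described in the context satisfy, for $N\ge1$, $$\Pr\{x^N\mid N,m^N,u^N\}=\prod_{k=1}^N[c(m_k,u_k)]^{x_k}[1-c(m_k,u_k)]^{1-x_k},$$ then $$\Pr\{N\ge1,\ \tilde P_{m^N,u^N,x^N}\notin\mathcal{P}^{\bm{\xi},\delta_2(N)}\}\le\eta_2.$$
   Context: For a finite set $\Omega$, $\mathcal{P}_\Omega$ is the set of probability mass functions on $\Omega$; for $\omega^n\in\Omega^n$ the type is $\tilde P_{\omega^n}(\omega)=\frac1n|\{i:\omega_i=\omega\}|$ ($\tilde P_{m^N,u^N,x^N}$ is the type of the sequence of triples $(m_k,u_k,x_k)$). Let $\mathcal{M}=\{0,\dots,L\}$, $\mathcal{U}=\mathcal{X}=\{0,1\}$, $\mathcal{W}=\{(M,U,X)\in\mathcal{M}\times\mathcal{U}\times\mathcal{X}:0\le M-U-X\le L-2\}$, and $c(M,U):=(M-U)/(L-1)$. For $P\in\mathcal{P}_{\mathcal{W}}$, $P_{\mathcal{M}\times\mathcal{U}}$ is the distribution of $(M,U)$ under $P$. Random variables: on a probability space (probability $\Pr$), $N$ is a non-negative integer and when $N\ge1$,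 $m^N\in\mathcal{M}^N$, $u^N\in\mathcal{U}^N$, $x^N\in\mathcal{X}^N$ with $(m_k,u_k,x_k)\in\mathcal{W}$ for all $k$. $\mathcal{P}^{\bm{\xi},\delta_2}:=\{P\in\mathcal{P}_{\mathcal{W}}: \mathbb{E}_{(M,U,X)\sim P}[(X-c(M,U))\xi_{M,U}]\le\frac{\delta_2}{3}+[(\frac{\delta_2}{3})^2+2\delta_2\,\mathbb{E}_{(M,U)\sim P_{\mathcal{M}\times\mathcal{U}}}[c(M,U)(1-c(M,U))\xi_{M,U}^2]]^{1/2}\}$. *)

theory Defs
  imports "HOL-Probability.Probability"
begin

definition W :: "nat \<Rightarrow> (nat \<times> nat \<times> nat) set" where
  "W L = {(M, U, X). M \<le> L \<and> U \<le> 1 \<and> X \<le> 1 \<and>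
            0 \<le> int M - int U - int X \<and> int M - int U - int X \<le> int L - 2}"

definition cc :: "nat \<Rightarrow> nat \<Rightarrow> nat \<Rightarrow> real" where
  "cc L M U = (real M - real U) / (real L - 1)"

definition PW :: "nat \<Rightarrow> ((nat \<times> nat \<times> nat) \<Rightarrow> real) set" where
  "PW L = {P. (\<forall>w. 0 \<le> P w) \<and> (\<forall>w. w \<notin> W L \<longrightarrow> P w = 0) \<and> (\<Sum>w\<in>W L. P w) = 1}"

text \<open>The set P^{xi,delta2}. The expectation over the (M,U)-marginal is written as
  a sum over W with the joint weights (which is what it unfolds to).\<close>
definition Pxi :: "nat \<Rightarrow> (nat \<Rightarrow> nat \<Rightarrow> real) \<Rightarrow> real \<Rightarrow> ((nat \<times> nat \<times> nat) \<Rightarrow> real) set" where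
  "Pxi L xi d = {P \<in> PW L.
     (\<Sum>(M, U, X)\<in>W L. P (M, U, X) * ((real X - cc L M U) * xi M U))
       \<le> d / 3 + sqrt ((d / 3)\<^sup>2 + 2 * d *
            (\<Sum>(M, U, X)\<in>W L. P (M, U, X) * (cc L M U * (1 - cc L M U) * (xi M U)\<^sup>2)))}"

definition seqtype :: "'a list \<Rightarrow> 'a \<Rightarrow> real" where
  "seqtype ws t = real (length (filter (\<lambda>v. v = t) ws)) / real (length ws)"

definition mu_of :: "(nat \<times> nat \<times> nat) list \<Rightarrow> (nat \<times> nat) list" where
  "mu_of ws = map (\<lambda>(m, u, x). (m, u)) ws"

end

theory Submission
  imports Defs
begin

text \<open>Conditionally on the pairs \<open>(m\<^sub>k, u\<^sub>k)\<close>, the labels \<open>x\<^sub>k\<close> are independent Bernoulli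
  variables with means \<open>c\<^sub>k = c(m\<^sub>k, u\<^sub>k)\<close>, so the law of the sequence is dominated by a mixture of
  products of Bernoulli laws and it suffices to fix the pairs. The type then lies outside
  \<open>P\<^bsup>\<xi>,\<delta>\<^esup>\<close> exactly when \<open>Z = \<Sum>\<^sub>k (x\<^sub>k - c\<^sub>k) \<xi>\<^sub>k\<close> exceeds
  \<open>t = N (\<delta>/3 + sqrt ((\<delta>/3)\<^sup>2 + 2 \<delta> V / N))\<close>, where \<open>V = \<Sum>\<^sub>k c\<^sub>k (1 - c\<^sub>k) \<xi>\<^sub>k\<^sup>2\<close>.
  From \<open>e\<^sup>\<lambda>\<^sup>y \<le> 1 + \<lambda> y + y\<^sup>2 \<phi>(\<lambda>)\<close> for \<open>|y| \<le> 1\<close>, where \<open>\<phi>(\<lambda>) = e\<^sup>\<lambda> - 1 - \<lambda>\<close>, the moment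
  generating function of \<open>Z\<close> is at most \<open>exp (\<phi>(\<lambda>) V)\<close>; with \<open>\<phi>(\<lambda>) \<le> \<lambda>\<^sup>2 / (2 (1 - \<lambda>/3))\<close> and
  a suitable \<open>\<lambda>\<close>, the Chernoff bound becomes Bernstein's inequality \<open>Pr{Z > t} \<le> exp (- N \<delta>)\<close>.\<close>

section \<open>Exponential inequalities\<close>

lemma summable_exp_tail: "summable (\<lambda>n. inverse (fact (n + 2)) * (x::real) ^ (n + 2))"
  using summable_exp[of x] summable_iff_shift[of "\<lambda>n. inverse (fact n) * x ^ n" 2] by simp

lemma exp_minus_one_minus_eq_suminf:
  "exp x - 1 - x = (\<Sum>n. inverse (fact (n + 2)) * (x::real) ^ (n + 2))"
  using exp_first_two_terms[of x] by simp

lemma exp_mult_le_quadratic: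
  fixes l y :: real
  assumes l: "0 \<le> l" and y: "\<bar>y\<bar> \<le> 1"
  shows "exp (l * y) \<le> 1 + l * y + y\<^sup>2 * (exp l - 1 - l)"
proof -
  have term_le: "inverse (fact (n + 2)) * (l * y) ^ (n + 2)
      \<le> y\<^sup>2 * (inverse (fact (n + 2)) * l ^ (n + 2))" for n
  proof -
    have "y ^ n \<le> \<bar>y\<bar> ^ n" by (metis abs_ge_self power_abs)
    also have "\<dots> \<le> 1" using y by (simp add: power_le_one)
    finally have "y ^ n \<le> 1" .
    have "(l * y) ^ (n + 2) = l ^ (n + 2) * y\<^sup>2 * y ^ n"
      by (simp add: power_mult_distrib power_add power2_eq_square)
    also have "\<dots> \<le> l ^ (n + 2) * y\<^sup>2"
      using \<open>y ^ n \<le> 1\<close> l by (intro mult_left_le) auto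
    finally have "inverse (fact (n + 2)) * (l * y) ^ (n + 2)
        \<le> inverse (fact (n + 2)) * (l ^ (n + 2) * y\<^sup>2)"
      by (rule mult_left_mono) simp
    then show ?thesis by (simp only: ac_simps)
  qed
  have "exp (l * y) - 1 - l * y \<le> (\<Sum>n. y\<^sup>2 * (inverse (fact (n + 2)) * l ^ (n + 2)))"
    unfolding exp_minus_one_minus_eq_suminf
    by (intro suminf_le term_le summable_exp_tail summable_mult)
  also have "\<dots> = y\<^sup>2 * (exp l - 1 - l)"
    unfolding exp_minus_one_minus_eq_suminf by (rule suminf_mult[OF summable_exp_tail])
  finally show ?thesis by simp
qed

lemma two_mult_three_power_le_fact: "2 * 3 ^ n \<le> (fact (n + 2) :: real)"
proof (induction n)
  case (Suc n)
  have "3 * (2 * 3 ^ n) \<le> (of_nat (n + 3) :: real) * fact (n + 2)"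
    using Suc by (intro mult_mono) auto
  then show ?case by (simp add: fact_Suc[of "n + 2"] algebra_simps)
qed simp

text \<open>Bernstein's bound on \<open>\<phi>(l) = e\<^sup>l - 1 - l\<close>: compare the series termwise with a geometric one.\<close>

lemma exp_minus_one_minus_le:
  fixes l :: real
  assumes "0 \<le> l" "l < 3"
  shows "exp l - 1 - l \<le> l\<^sup>2 / (2 * (1 - l / 3))"
proof -
  have geom: "(\<lambda>n. (l / 3) ^ n) sums (1 / (1 - l / 3))"
    using assms by (intro geometric_sums) auto
  have term_le: "inverse (fact (n + 2)) * l ^ (n + 2) \<le> l\<^sup>2 / 2 * (l / 3) ^ n" for n
  proof -
    have "inverse (fact (n + 2)) \<le> inverse (2 * 3 ^ n :: real)"
      using two_mult_three_power_le_fact[of n] by (intro le_imp_inverse_le) auto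
    then have "inverse (fact (n + 2)) * l ^ (n + 2) \<le> inverse (2 * 3 ^ n :: real) * l ^ (n + 2)"
      using assms by (intro mult_right_mono) auto
    also have "\<dots> = l\<^sup>2 / 2 * (l / 3) ^ n"
      by (simp add: power_add power_divide field_simps power2_eq_square)
    finally show ?thesis .
  qed
  have "exp l - 1 - l \<le> (\<Sum>n. l\<^sup>2 / 2 * (l / 3) ^ n)"
    unfolding exp_minus_one_minus_eq_suminf
    using geom by (intro suminf_le term_le summable_exp_tail summable_mult) (auto simp: sums_iff)
  also have "\<dots> = l\<^sup>2 / 2 * (1 / (1 - l / 3))"
    using sums_unique[OF sums_mult[OF geom, of "l\<^sup>2 / 2"]] by simp
  finally show ?thesis by simp
qed

text \<open>The Chernoff exponent reaches \<open>- N d\<close> at the threshold \<open>t\<close>; the witness is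
  \<open>l = t / (V + t / 3)\<close>, for which \<open>t\<^sup>2 = 2 N d (V + t / 3)\<close>.\<close>

lemma bernstein_exponent_le:
  fixes N d V t :: real
  assumes N: "0 < N" and d: "0 < d" and V: "0 \<le> V"
    and t: "t = N * (d / 3 + sqrt ((d / 3)\<^sup>2 + 2 * d * (V / N)))"
  shows "\<exists>l\<ge>0. - (l * t) + (exp l - 1 - l) * V \<le> - (N * d)"
proof (cases "V = 0")
  case True
  then have "t = N * (2 * d / 3)" using t d by simp
  then show ?thesis using True by (intro exI[of _ "3 / 2"]) (simp add: field_simps)
next
  case False
  then have Vp: "0 < V" using V by simp
  define s where "s = sqrt ((d / 3)\<^sup>2 + 2 * d * (V / N))"
  have s0: "0 \<le> s" using d V N by (simp add: s_def)
  have s2: "s\<^sup>2 = (d / 3)\<^sup>2 + 2 * d * (V / N)"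
    unfolding s_def using d V N by (intro real_sqrt_pow2) simp
  have ts: "t = N * (d / 3 + s)" using t by (simp add: s_def)
  have tp: "0 < t" unfolding ts using N d s0 by (intro mult_pos_pos) auto
  define D where "D = V + t / 3"
  have Dp: "0 < D" using Vp tp by (simp add: D_def)
  have key: "t\<^sup>2 = 2 * N * d * D"
  proof -
    have "t\<^sup>2 = N\<^sup>2 * ((d / 3)\<^sup>2 + 2 * (d / 3) * s + s\<^sup>2)"
      by (simp add: ts power2_eq_square algebra_simps)
    also have "\<dots> = N\<^sup>2 * (2 * (d / 3)\<^sup>2 + 2 * (d / 3) * s + 2 * d * (V / N))"
      by (simp add: s2)
    also have "\<dots> = 2 * N * d * (V + N * (d / 3 + s) / 3)"
      using N by (simp add: power2_eq_square field_simps)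
    finally show ?thesis by (simp add: ts D_def)
  qed
  define l where "l = t / D"
  have l0: "0 \<le> l" using tp Dp by (simp add: l_def)
  have l3: "l < 3" using Vp tp Dp by (simp add: l_def D_def field_simps)
  have "(exp l - 1 - l) * V \<le> l\<^sup>2 / (2 * (1 - l / 3)) * V"
    using exp_minus_one_minus_le[OF l0 l3] V by (intro mult_right_mono) auto
  also have "1 - l / 3 = V / D"
    using Dp by (simp add: l_def D_def field_simps)
  also have "l\<^sup>2 / (2 * (V / D)) * V = t\<^sup>2 / (2 * D)"
    using Vp Dp by (simp add: l_def power2_eq_square field_simps)
  finally have "- (l * t) + (exp l - 1 - l) * V \<le> - (t\<^sup>2 / D) + t\<^sup>2 / (2 * D)"
    by (simp add: l_def power2_eq_square)
  also have "\<dots> = - (N * d)" using key Dp by (simp add: field_simps)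
  finally show ?thesis using l0 by blast
qed

lemma bernoulli_mgf_le:
  fixes c a l :: real
  assumes c: "0 \<le> c" "c \<le> 1" and a: "\<bar>a\<bar> \<le> 1" and l: "0 \<le> l"
  shows "c * exp (l * ((1 - c) * a)) + (1 - c) * exp (l * ((0 - c) * a))
         \<le> exp ((exp l - 1 - l) * (c * (1 - c) * a\<^sup>2))"
proof -
  let ?\<phi> = "exp l - 1 - l"
  have "\<bar>(1 - c) * a\<bar> \<le> 1" "\<bar>(0 - c) * a\<bar> \<le> 1"
    using c a by (simp_all add: abs_mult mult_le_one)
  then have "c * exp (l * ((1 - c) * a)) + (1 - c) * exp (l * ((0 - c) * a))
      \<le> c * (1 + l * ((1 - c) * a) + ((1 - c) * a)\<^sup>2 * ?\<phi>)
        + (1 - c) * (1 + l * ((0 - c) * a) + ((0 - c) * a)\<^sup>2 * ?\<phi>)"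
    using c by (intro add_mono mult_left_mono exp_mult_le_quadratic l) auto
  also have "\<dots> = 1 + ?\<phi> * (c * (1 - c) * a\<^sup>2)"
    by (simp add: algebra_simps power2_eq_square)
  also have "\<dots> \<le> exp (?\<phi> * (c * (1 - c) * a\<^sup>2))"
    by (rule exp_ge_add_one_self)
  finally show ?thesis .
qed

section \<open>Independent Bernoulli labels\<close>

text \<open>The conditional law of \<open>x\<^sup>N\<close> given \<open>(m\<^sup>N, u\<^sup>N)\<close> described by the hypothesis \<open>cond\<close>
  of the theorem.\<close>

fun bernoulli_labels ::
    "(nat \<Rightarrow> nat \<Rightarrow> real) \<Rightarrow> (nat \<times> nat) list \<Rightarrow> (nat \<times> nat \<times> nat) list pmf"
  where
    "bernoulli_labels c [] = return_pmf []"
  | "bernoulli_labels c ((m, u) # mus) =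
       bind_pmf (bernoulli_pmf (c m u))
         (\<lambda>b. map_pmf (\<lambda>ws. (m, u, of_bool b) # ws) (bernoulli_labels c mus))"

definition centered_sum ::
    "(nat \<Rightarrow> nat \<Rightarrow> real) \<Rightarrow> (nat \<Rightarrow> nat \<Rightarrow> real) \<Rightarrow> (nat \<times> nat \<times> nat) list \<Rightarrow> real"
  where "centered_sum c a ws = (\<Sum>(m, u, x)\<leftarrow>ws. (real x - c m u) * a m u)"

definition variance_sum ::
    "(nat \<Rightarrow> nat \<Rightarrow> real) \<Rightarrow> (nat \<Rightarrow> nat \<Rightarrow> real) \<Rightarrow> (nat \<times> nat) list \<Rightarrow> real"
  where "variance_sum c a mus = (\<Sum>(m, u)\<leftarrow>mus. c m u * (1 - c m u) * (a m u)\<^sup>2)"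

lemma variance_sum_nonneg:
  assumes "\<forall>(m, u)\<in>set mus. 0 \<le> c m u \<and> c m u \<le> 1"
  shows "0 \<le> variance_sum c a mus"
  unfolding variance_sum_def using assms by (intro sum_list_nonneg) auto

lemma set_pmf_bernoulli_labels:
  assumes "\<forall>(m, u)\<in>set mus. 0 \<le> c m u \<and> c m u \<le> 1"
    and "ws \<in> set_pmf (bernoulli_labels c mus)"
  shows "mu_of ws = mus \<and> (\<forall>(m, u, x)\<in>set ws. x = 1 \<and> 0 < c m u \<or> x = 0 \<and> c m u < 1)"
  using assms
proof (induction mus arbitrary: ws)
  case Nil
  then show ?case by (simp add: mu_of_def)
next
  case (Cons mu mus)
  obtain m u where mu: "mu = (m, u)" by force
  have c: "0 \<le> c m u" "c m u \<le> 1" using Cons.prems(1) mu by auto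
  from Cons.prems(2) obtain b ws' where b: "b \<in> set_pmf (bernoulli_pmf (c m u))"
    and ws': "ws' \<in> set_pmf (bernoulli_labels c mus)" and ws: "ws = (m, u, of_bool b) # ws'"
    by (auto simp: mu)
  have "of_bool b = (1::nat) \<and> 0 < c m u \<or> of_bool b = (0::nat) \<and> c m u < 1"
    using b c by (cases b) (auto simp: set_pmf_iff)
  then show ?case using Cons.IH[OF _ ws'] Cons.prems(1) by (auto simp: ws mu mu_of_def)
qed

lemma pmf_bernoulli_labels:
  assumes "\<forall>(m, u, x)\<in>set ws. x \<le> 1 \<and> 0 \<le> c m u \<and> c m u \<le> 1"
  shows "pmf (bernoulli_labels c (mu_of ws)) ws = (\<Prod>(m, u, x)\<leftarrow>ws. (c m u) ^ x * (1 - c m u) ^ (1 - x))"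
  using assms
proof (induction ws)
  case Nil
  then show ?case by (simp add: mu_of_def)
next
  case (Cons w ws)
  obtain m u x where w: "w = (m, u, x)" by (cases w) auto
  have x: "x = 0 \<or> x = 1" and c: "0 \<le> c m u" "c m u \<le> 1" using Cons.prems w by fastforce+
  have "(\<lambda>ws'. (m, u, of_bool b) # ws') -` {(m, u, x) # ws} = (if of_bool b = x then {ws} else {})"
    for b by auto
  then have "pmf (bernoulli_labels c (mu_of (w # ws))) (w # ws) =
      (c m u) ^ x * (1 - c m u) ^ (1 - x) * pmf (bernoulli_labels c (mu_of ws)) ws"
    using x c by (auto simp: w mu_of_def pmf_bind pmf_map measure_pmf_single)
  moreover have "pmf (bernoulli_labels c (mu_of ws)) ws = (\<Prod>(m, u, x)\<leftarrow>ws. (c m u) ^ x * (1 - c m u) ^ (1 - x))"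
    using Cons.IH Cons.prems by simp
  ultimately show ?case by (simp add: w)
qed

lemma nn_integral_exp_centered_sum_le:
  assumes c: "\<forall>(m, u)\<in>set mus. 0 \<le> c m u \<and> c m u \<le> 1"
    and a: "\<forall>(m, u)\<in>set mus. \<bar>a m u\<bar> \<le> 1"
    and l: "0 \<le> l"
  shows "(\<integral>\<^sup>+ws. exp (l * centered_sum c a ws) \<partial>bernoulli_labels c mus)
           \<le> exp ((exp l - 1 - l) * variance_sum c a mus)"
  using c a
proof (induction mus)
  case Nil
  then show ?case by (simp add: centered_sum_def variance_sum_def)
next
  case (Cons mu mus)
  obtain m u where mu: "mu = (m, u)" by force
  have cm: "0 \<le> c m u" "c m u \<le> 1" and am: "\<bar>a m u\<bar> \<le> 1" using Cons.prems mu by auto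
  define B where "B = exp ((exp l - 1 - l) * variance_sum c a mus)"
  define y where "y b = (of_bool b - c m u) * a m u" for b
  have IH: "(\<integral>\<^sup>+ws. exp (l * centered_sum c a ws) \<partial>bernoulli_labels c mus) \<le> B"
    using Cons.IH Cons.prems by (simp add: B_def)
  have tail: "(\<integral>\<^sup>+ws. exp (l * centered_sum c a ((m, u, of_bool b) # ws)) \<partial>bernoulli_labels c mus)
      \<le> ennreal (exp (l * y b) * B)" for b
  proof -
    have split: "ennreal (exp (l * centered_sum c a ((m, u, of_bool b) # ws)))
        = ennreal (exp (l * y b)) * ennreal (exp (l * centered_sum c a ws))" for ws
      by (simp add: centered_sum_def y_def distrib_left exp_add ennreal_mult)
    have "(\<integral>\<^sup>+ws. exp (l * centered_sum c a ((m, u, of_bool b) # ws)) \<partial>bernoulli_labels c mus)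
        = ennreal (exp (l * y b)) * (\<integral>\<^sup>+ws. exp (l * centered_sum c a ws) \<partial>bernoulli_labels c mus)"
      unfolding split by (rule nn_integral_cmult) simp
    also have "\<dots> \<le> ennreal (exp (l * y b)) * ennreal B"
      using IH by (rule mult_left_mono) simp
    also have "\<dots> = ennreal (exp (l * y b) * B)"
      by (simp add: B_def ennreal_mult)
    finally show ?thesis .
  qed
  have "(\<integral>\<^sup>+ws. exp (l * centered_sum c a ws) \<partial>bernoulli_labels c (mu # mus))
      = (\<integral>\<^sup>+b. \<integral>\<^sup>+ws. exp (l * centered_sum c a ((m, u, of_bool b) # ws))
           \<partial>bernoulli_labels c mus \<partial>bernoulli_pmf (c m u))"
    by (simp add: mu)
  also have "\<dots> \<le> (\<integral>\<^sup>+b. ennreal (exp (l * y b) * B) \<partial>bernoulli_pmf (c m u))"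
    by (intro nn_integral_mono tail)
  also have "\<dots> = ennreal (c m u * (exp (l * y True) * B) + (1 - c m u) * (exp (l * y False) * B))"
    using cm by (simp add: B_def ennreal_mult[symmetric] ennreal_plus[symmetric] mult.commute
        del: ennreal_plus)
  also have "\<dots> \<le> ennreal (exp ((exp l - 1 - l) * (c m u * (1 - c m u) * (a m u)\<^sup>2)) * B)"
  proof (rule ennreal_leI)
    have "c m u * exp (l * y True) + (1 - c m u) * exp (l * y False)
        \<le> exp ((exp l - 1 - l) * (c m u * (1 - c m u) * (a m u)\<^sup>2))"
      using bernoulli_mgf_le[OF cm am l] by (simp add: y_def)
    then show "c m u * (exp (l * y True) * B) + (1 - c m u) * (exp (l * y False) * B)
        \<le> exp ((exp l - 1 - l) * (c m u * (1 - c m u) * (a m u)\<^sup>2)) * B"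
      by (simp add: B_def mult.assoc[symmetric] distrib_right[symmetric])
  qed
  also have "\<dots> = exp ((exp l - 1 - l) * variance_sum c a (mu # mus))"
    by (simp add: B_def variance_sum_def mu distrib_left exp_add)
  finally show ?case .
qed

lemma emeasure_centered_sum_gt_le:
  assumes c: "\<forall>(m, u)\<in>set mus. 0 \<le> c m u \<and> c m u \<le> 1"
    and a: "\<forall>(m, u)\<in>set mus. \<bar>a m u\<bar> \<le> 1"
    and l: "0 \<le> l"
  shows "emeasure (bernoulli_labels c mus) {ws. t < centered_sum c a ws}
           \<le> exp (- (l * t) + (exp l - 1 - l) * variance_sum c a mus)"
proof -
  have markov: "indicator {ws. t < centered_sum c a ws} ws
      \<le> ennreal (exp (- (l * t))) * ennreal (exp (l * centered_sum c a ws))" for ws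
  proof (cases "t < centered_sum c a ws")
    case True
    then have "l * t \<le> l * centered_sum c a ws" using l by (intro mult_left_mono) auto
    then have "1 \<le> exp (- (l * t)) * exp (l * centered_sum c a ws)"
      by (simp add: exp_add[symmetric])
    then show ?thesis using True by (simp add: ennreal_mult[symmetric])
  qed simp
  have "emeasure (bernoulli_labels c mus) {ws. t < centered_sum c a ws}
      = (\<integral>\<^sup>+ws. indicator {ws. t < centered_sum c a ws} ws \<partial>bernoulli_labels c mus)"
    by simp
  also have "\<dots> \<le> (\<integral>\<^sup>+ws. ennreal (exp (- (l * t))) * ennreal (exp (l * centered_sum c a ws))
      \<partial>bernoulli_labels c mus)"
    by (rule nn_integral_mono) (rule markov)
  also have "\<dots> = ennreal (exp (- (l * t))) * (\<integral>\<^sup>+ws. exp (l * centered_sum c a ws) \<partial>bernoulli_labels c mus)"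
    by (rule nn_integral_cmult) simp
  also have "\<dots> \<le> ennreal (exp (- (l * t))) * ennreal (exp ((exp l - 1 - l) * variance_sum c a mus))"
    using nn_integral_exp_centered_sum_le[OF assms] by (intro mult_left_mono) auto
  also have "\<dots> = exp (- (l * t) + (exp l - 1 - l) * variance_sum c a mus)"
    by (subst exp_add) (simp add: ennreal_mult)
  finally show ?thesis .
qed

theorem bernstein_centered_sum:
  assumes c: "\<forall>(m, u)\<in>set mus. 0 \<le> c m u \<and> c m u \<le> 1"
    and a: "\<forall>(m, u)\<in>set mus. \<bar>a m u\<bar> \<le> 1"
    and N: "N = real (length mus)" and "mus \<noteq> []" and d: "0 < d"
  shows "measure_pmf.prob (bernoulli_labels c mus)
           {ws. N * (d / 3 + sqrt ((d / 3)\<^sup>2 + 2 * d * (variance_sum c a mus / N)))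
                  < centered_sum c a ws}
         \<le> exp (- (N * d))"
proof -
  let ?t = "N * (d / 3 + sqrt ((d / 3)\<^sup>2 + 2 * d * (variance_sum c a mus / N)))"
  have N0: "0 < N" using N \<open>mus \<noteq> []\<close> by simp
  have V0: "0 \<le> variance_sum c a mus" using c by (rule variance_sum_nonneg)
  obtain l where l: "0 \<le> l"
    and exponent: "- (l * ?t) + (exp l - 1 - l) * variance_sum c a mus \<le> - (N * d)"
    using bernstein_exponent_le[OF N0 d V0 refl] by blast
  have "emeasure (bernoulli_labels c mus) {ws. ?t < centered_sum c a ws} \<le> exp (- (N * d))"
    using emeasure_centered_sum_gt_le[OF c a l] ennreal_leI[OF exp_mono[OF exponent]]
    by (rule order_trans)
  then show ?thesis by (simp add: measure_pmf.emeasure_eq_measure)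
qed

section \<open>Empirical types of labelled sequences\<close>

lemma seqtype_eq_count_list: "seqtype ws w = real (count_list ws w) / real (length ws)"
proof -
  have "length (filter (\<lambda>v. v = w) ws) = count_list ws w"
    by (induction ws) auto
  then show ?thesis by (simp add: seqtype_def)
qed

lemma sum_count_list_mult:
  fixes h :: "'a \<Rightarrow> real"
  assumes "finite A"
  shows "set ws \<subseteq> A \<Longrightarrow> (\<Sum>w\<in>A. real (count_list ws w) * h w) = sum_list (map h ws)"
proof (induction ws)
  case (Cons v ws)
  have "(\<Sum>w\<in>A. real (count_list (v # ws) w) * h w)
      = (\<Sum>w\<in>A. (if v = w then h w else 0) + real (count_list ws w) * h w)"
    by (intro sum.cong) (auto simp: algebra_simps)
  also have "\<dots> = h v + (\<Sum>w\<in>A. real (count_list ws w) * h w)"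
    using Cons.prems assms by (simp add: sum.distrib)
  finally show ?case using Cons by simp
qed simp

lemma sum_seqtype_mult:
  fixes h :: "'a \<Rightarrow> real"
  assumes "finite A" "set ws \<subseteq> A"
  shows "(\<Sum>w\<in>A. seqtype ws w * h w) = sum_list (map h ws) / real (length ws)"
  using sum_count_list_mult[OF assms, of h]
  by (simp add: seqtype_eq_count_list sum_divide_distrib[symmetric])

lemma finite_W: "finite (W L)"
proof (rule finite_subset)
  show "W L \<subseteq> {..L} \<times> {..1} \<times> {..1}" by (auto simp: W_def)
qed auto

lemma seqtype_in_PW:
  assumes "set ws \<subseteq> W L" "ws \<noteq> []"
  shows "seqtype ws \<in> PW L"
proof -
  have "(\<Sum>w\<in>W L. seqtype ws w) = 1"
    using sum_seqtype_mult[OF finite_W assms(1), of "\<lambda>_. 1"] assms(2) by (simp add: sum_list_triv)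
  moreover have "seqtype ws w = 0" if "w \<notin> W L" for w
  proof -
    have "w \<notin> set ws" using that assms(1) by blast
    then show ?thesis by (simp add: seqtype_eq_count_list)
  qed
  ultimately show ?thesis by (auto simp: PW_def seqtype_eq_count_list)
qed

lemma seqtype_in_Pxi_iff:
  assumes "set ws \<subseteq> W L" "ws \<noteq> []"
  shows "seqtype ws \<in> Pxi L xi d \<longleftrightarrow>
    centered_sum (cc L) xi ws \<le> real (length ws) *
      (d / 3 + sqrt ((d / 3)\<^sup>2 + 2 * d * (variance_sum (cc L) xi (mu_of ws) / real (length ws))))"
proof -
  have sum_eq: "(\<Sum>(M, U, X)\<in>W L. seqtype ws (M, U, X) * g M U X)
      = (\<Sum>(m, u, x)\<leftarrow>ws. g m u x) / real (length ws)" for g :: "nat \<Rightarrow> nat \<Rightarrow> nat \<Rightarrow> real"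
    using sum_seqtype_mult[OF finite_W assms(1), of "\<lambda>(m, u, x). g m u x"]
    by (simp add: case_prod_unfold)
  have "variance_sum (cc L) xi (mu_of ws)
      = (\<Sum>(m, u, x)\<leftarrow>ws. cc L m u * (1 - cc L m u) * (xi m u)\<^sup>2)"
    by (simp add: variance_sum_def mu_of_def comp_def case_prod_unfold)
  then show ?thesis
    using seqtype_in_PW[OF assms] assms(2)
    by (simp add: Pxi_def sum_eq centered_sum_def divide_le_eq mult.commute)
qed

section \<open>Mixtures\<close>

lemma measure_pmf_mono_on_set_pmf:
  assumes "A \<inter> set_pmf p \<subseteq> B"
  shows "measure_pmf.prob p A \<le> measure_pmf.prob p B"
proof -
  have "measure_pmf.prob p (A \<inter> set_pmf p) \<le> measure_pmf.prob p B"
    using assms by (rule measure_pmf.finite_measure_mono) simp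
  then show ?thesis by (simp add: measure_Int_set_pmf)
qed

lemma measure_pmf_le_bind_pmf:
  assumes "\<And>x. x \<in> A \<Longrightarrow> pmf p x \<le> pmf r (f x) * pmf (K (f x)) x"
  shows "measure_pmf.prob p A \<le> measure_pmf.prob (bind_pmf r K) A"
  unfolding measure_pmf_conv_infsetsum
proof (rule infsetsum_mono[OF pmf_abs_summable pmf_abs_summable])
  fix x assume "x \<in> A"
  have "ennreal (pmf r (f x) * pmf (K (f x)) x) = (\<integral>\<^sup>+y. ennreal (pmf (K (f x)) x) * indicator {f x} y \<partial>r)"
    by (subst nn_integral_cmult_indicator) (simp_all add: emeasure_pmf_single ennreal_mult mult.commute)
  also have "\<dots> \<le> (\<integral>\<^sup>+y. pmf (K y) x \<partial>r)"
    by (intro nn_integral_mono) (auto simp: indicator_def)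
  also have "\<dots> = pmf (bind_pmf r K) x" by (simp add: ennreal_pmf_bind)
  finally show "pmf p x \<le> pmf (bind_pmf r K) x"
    using assms[OF \<open>x \<in> A\<close>] by (simp add: ennreal_le_iff)
qed

lemma measure_bind_pmf_le:
  assumes "\<And>y. y \<in> set_pmf r \<Longrightarrow> measure_pmf.prob (K y) A \<le> b"
  shows "measure_pmf.prob (bind_pmf r K) A \<le> b"
proof -
  obtain y where "y \<in> set_pmf r" using set_pmf_not_empty[of r] by blast
  from assms[OF this] have "0 \<le> b" by (meson measure_nonneg order_trans)
  have "emeasure (bind_pmf r K) A = (\<integral>\<^sup>+y. emeasure (K y) A \<partial>r)" by simp
  also have "\<dots> \<le> (\<integral>\<^sup>+y. ennreal b \<partial>r)"
    using assms by (intro nn_integral_mono_AE)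
      (auto simp: AE_measure_pmf_iff measure_pmf.emeasure_eq_measure intro: ennreal_leI)
  also have "\<dots> = b" by (simp add: measure_pmf.emeasure_space_1)
  finally show ?thesis using \<open>0 \<le> b\<close> by (simp add: measure_pmf.emeasure_eq_measure)
qed

section \<open>The model on \<open>W\<close>\<close>

lemma cc_compare_iff:
  assumes "L \<ge> 2"
  shows "0 \<le> cc L m u \<longleftrightarrow> u \<le> m" "0 < cc L m u \<longleftrightarrow> u < m"
    "cc L m u \<le> 1 \<longleftrightarrow> m + 1 \<le> u + L" "cc L m u < 1 \<longleftrightarrow> m + 1 < u + L"
proof -
  have L: "0 < real L - 1" using assms by simp
  show "0 \<le> cc L m u \<longleftrightarrow> u \<le> m" "0 < cc L m u \<longleftrightarrow> u < m"
    using L by (simp_all add: cc_def zero_le_divide_iff zero_less_divide_iff)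
  have "m + 1 \<le> u + L \<longleftrightarrow> real m - real u \<le> real L - 1"
    "m + 1 < u + L \<longleftrightarrow> real m - real u < real L - 1" by linarith+
  then show "cc L m u \<le> 1 \<longleftrightarrow> m + 1 \<le> u + L" "cc L m u < 1 \<longleftrightarrow> m + 1 < u + L"
    using L by (simp_all add: cc_def divide_le_eq_1 divide_less_eq_1)
qed

lemma W_bounds:
  assumes "L \<ge> 2" "(m, u, x) \<in> W L"
  shows "m \<le> L" "u \<le> 1" "x \<le> 1" "0 \<le> cc L m u" "cc L m u \<le> 1"
  using assms by (auto simp: cc_compare_iff W_def)

lemma label_in_W:
  assumes "L \<ge> 2" "(m, u, x') \<in> W L"
    and "x = 1 \<and> 0 < cc L m u \<or> x = 0 \<and> cc L m u < 1"
  shows "(m, u, x) \<in> W L"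
  using assms by (auto simp: cc_compare_iff W_def)

lemma cc_bounds_labels:
  assumes "L \<ge> 2" "set mus \<subseteq> (\<lambda>(m, u, x). (m, u)) ` W L"
  shows "\<forall>(m, u)\<in>set mus. 0 \<le> cc L m u \<and> cc L m u \<le> 1"
proof (intro ballI, clarify)
  fix m u assume "(m, u) \<in> set mus"
  then obtain x where "(m, u, x) \<in> W L" using assms(2) by auto
  then show "0 \<le> cc L m u \<and> cc L m u \<le> 1" using W_bounds[OF assms(1)] by auto
qed

lemma set_pmf_bernoulli_labels_cc:
  assumes L: "L \<ge> 2" and labels: "set mus \<subseteq> (\<lambda>(m, u, x). (m, u)) ` W L"
    and ws: "ws \<in> set_pmf (bernoulli_labels (cc L) mus)"
  shows "set ws \<subseteq> W L \<and> mu_of ws = mus"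
proof -
  note c = cc_bounds_labels[OF L labels]
  have labels_ws: "mu_of ws = mus"
    and x: "\<forall>(m, u, x)\<in>set ws. x = 1 \<and> 0 < cc L m u \<or> x = 0 \<and> cc L m u < 1"
    using set_pmf_bernoulli_labels[OF c ws] by auto
  have "(m, u, x) \<in> W L" if "(m, u, x) \<in> set ws" for m u x
  proof -
    have "(m, u) \<in> set mus" using that labels_ws by (force simp: mu_of_def)
    then obtain x' where "(m, u, x') \<in> W L" using labels by auto
    then show ?thesis using label_in_W[OF L] x that by blast
  qed
  then show ?thesis using labels_ws by auto
qed

lemma measure_seqtype_notin_Pxi_le:
  assumes L: "L \<ge> 2" and labels: "set mus \<subseteq> (\<lambda>(m, u, x). (m, u)) ` W L" and "mus \<noteq> []"
    and xi: "\<forall>(m, u)\<in>set mus. \<bar>xi m u\<bar> \<le> 1"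
  shows "measure_pmf.prob (bernoulli_labels (cc L) mus) {ws. seqtype ws \<notin> Pxi L xi (\<delta> (length ws))}
           \<le> exp (- (real (length mus) * \<delta> (length mus)))"
proof (cases "\<delta> (length mus) > 0")
  case False
  then have "1 \<le> exp (- (real (length mus) * \<delta> (length mus)))"
    by (simp add: mult_nonneg_nonpos)
  moreover have "measure_pmf.prob (bernoulli_labels (cc L) mus)
      {ws. seqtype ws \<notin> Pxi L xi (\<delta> (length ws))} \<le> 1"
    by (rule measure_pmf.prob_le_1)
  ultimately show ?thesis by linarith
next
  case True
  let ?N = "real (length mus)" and ?d = "\<delta> (length mus)"
  let ?t = "?N * (?d / 3 + sqrt ((?d / 3)\<^sup>2 + 2 * ?d * (variance_sum (cc L) xi mus / ?N)))"
  have "measure_pmf.prob (bernoulli_labels (cc L) mus) {ws. seqtype ws \<notin> Pxi L xi (\<delta> (length ws))}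
      \<le> measure_pmf.prob (bernoulli_labels (cc L) mus) {ws. ?t < centered_sum (cc L) xi ws}"
  proof (rule measure_pmf_mono_on_set_pmf, safe)
    fix ws assume ws: "ws \<in> set_pmf (bernoulli_labels (cc L) mus)"
      and "seqtype ws \<notin> Pxi L xi (\<delta> (length ws))"
    moreover have "set ws \<subseteq> W L" "mu_of ws = mus"
      using set_pmf_bernoulli_labels_cc[OF L labels ws] by auto
    moreover have "ws \<noteq> []" "length ws = length mus"
      using \<open>mus \<noteq> []\<close> \<open>mu_of ws = mus\<close> by (auto simp: mu_of_def)
    ultimately show "?t < centered_sum (cc L) xi ws"
      by (simp add: seqtype_in_Pxi_iff not_le)
  qed
  also have "\<dots> \<le> exp (- (?N * ?d))"
    by (rule bernstein_centered_sum[OF cc_bounds_labels[OF L labels] xi refl \<open>mus \<noteq> []\<close> True])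
  finally show ?thesis .
qed

lemma measure_pmf_le_bernoulli_mixture:
  assumes L: "L \<ge> 2"
    and support: "\<And>ws. ws \<in> set_pmf p \<Longrightarrow> set ws \<subseteq> W L"
    and cond: "\<And>ws. length ws \<ge> 1 \<Longrightarrow> set ws \<subseteq> W L \<Longrightarrow>
        pmf p ws = measure_pmf.prob p {vs. mu_of vs = mu_of ws} *
          (\<Prod>(m, u, x)\<leftarrow>ws. (cc L m u) ^ x * (1 - cc L m u) ^ (1 - x))"
    and E: "\<And>ws. ws \<in> E \<Longrightarrow> length ws \<ge> 1"
  shows "measure_pmf.prob p E
           \<le> measure_pmf.prob (bind_pmf (map_pmf mu_of p) (bernoulli_labels (cc L))) E"
proof (rule measure_pmf_le_bind_pmf)
  fix ws assume "ws \<in> E"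
  show "pmf p ws \<le> pmf (map_pmf mu_of p) (mu_of ws) * pmf (bernoulli_labels (cc L) (mu_of ws)) ws"
  proof (cases "ws \<in> set_pmf p")
    case True
    then have W: "set ws \<subseteq> W L" by (rule support)
    have "x \<le> 1 \<and> 0 \<le> cc L m u \<and> cc L m u \<le> 1" if "(m, u, x) \<in> set ws" for m u x
      using W_bounds[OF L] that W by blast
    then have "pmf (bernoulli_labels (cc L) (mu_of ws)) ws
        = (\<Prod>(m, u, x)\<leftarrow>ws. (cc L m u) ^ x * (1 - cc L m u) ^ (1 - x))"
      by (intro pmf_bernoulli_labels) auto
    then show ?thesis by (simp add: cond[OF E[OF \<open>ws \<in> E\<close>] W] pmf_map vimage_def)
  qed (simp add: set_pmf_iff)
qed

lemma measure_atypical_bernoulli_labels_le: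
  assumes L: "L \<ge> 2" and vs: "set vs \<subseteq> W L"
    and xi_bound: "\<And>M U. M \<le> L \<Longrightarrow> U \<le> 1 \<Longrightarrow> 0 \<le> cc L M U \<Longrightarrow> cc L M U \<le> 1
                      \<Longrightarrow> \<bar>xi M U\<bar> \<le> 1"
    and delta: "\<And>N. N \<ge> 1 \<Longrightarrow> exp (- (real N * \<delta> N)) \<le> \<eta>"
  shows "measure_pmf.prob (bernoulli_labels (cc L) (mu_of vs))
           {ws. length ws \<ge> 1 \<and> seqtype ws \<notin> Pxi L xi (\<delta> (length ws))} \<le> \<eta>"
proof (cases "vs = []")
  case True
  have "0 < \<eta>" using delta[of 1] exp_gt_zero less_le_trans by blast
  with True show ?thesis by (simp add: mu_of_def)
next
  case False
  let ?mus = "mu_of vs"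
  have labels: "set ?mus \<subseteq> (\<lambda>(m, u, x). (m, u)) ` W L"
    unfolding mu_of_def using vs by (simp add: image_mono)
  have xi: "\<forall>(m, u)\<in>set ?mus. \<bar>xi m u\<bar> \<le> 1"
  proof (intro ballI, clarify)
    fix m u assume "(m, u) \<in> set ?mus"
    then obtain x where "(m, u, x) \<in> W L" using labels by auto
    then show "\<bar>xi m u\<bar> \<le> 1" using W_bounds[OF L] xi_bound by blast
  qed
  have "?mus \<noteq> []" using False by (simp add: mu_of_def)
  have "measure_pmf.prob (bernoulli_labels (cc L) ?mus)
      {ws. length ws \<ge> 1 \<and> seqtype ws \<notin> Pxi L xi (\<delta> (length ws))}
      \<le> measure_pmf.prob (bernoulli_labels (cc L) ?mus) {ws. seqtype ws \<notin> Pxi L xi (\<delta> (length ws))}"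
    by (rule measure_pmf.finite_measure_mono) auto
  also have "\<dots> \<le> exp (- (real (length ?mus) * \<delta> (length ?mus)))"
    by (rule measure_seqtype_notin_Pxi_le[OF L labels \<open>?mus \<noteq> []\<close> xi])
  also have "\<dots> \<le> \<eta>" using \<open>?mus \<noteq> []\<close> by (intro delta) (simp add: Suc_le_eq)
  finally show ?thesis .
qed

theorem proposition2:
  fixes L :: nat
    and xi :: "nat \<Rightarrow> nat \<Rightarrow> real"
    and eta2 :: real
    and delta2 :: "nat \<Rightarrow> real"
    and p :: "(nat \<times> nat \<times> nat) list pmf"
  assumes L: "L \<ge> 2"
    and xi_bound: "\<And>M U. M \<le> L \<Longrightarrow> U \<le> 1 \<Longrightarrow> 0 \<le> cc L M U \<Longrightarrow> cc L M U \<le> 1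
                      \<Longrightarrow> \<bar>xi M U\<bar> \<le> 1"
    and delta: "\<And>N. N \<ge> 1 \<Longrightarrow> exp (- (real N * delta2 N)) \<le> eta2"
    and support: "\<And>ws. ws \<in> set_pmf p \<Longrightarrow> set ws \<subseteq> W L"
    and cond: "\<And>ws. length ws \<ge> 1 \<Longrightarrow> set ws \<subseteq> W L \<Longrightarrow>
        pmf p ws = measure_pmf.prob p {vs. mu_of vs = mu_of ws} *
          (\<Prod>(m, u, x)\<leftarrow>ws. (cc L m u) ^ x * (1 - cc L m u) ^ (1 - x))"
  shows "measure_pmf.prob p
           {ws. length ws \<ge> 1 \<and> seqtype ws \<notin> Pxi L xi (delta2 (length ws))} \<le> eta2"
proof -
  let ?E = "{ws. length ws \<ge> 1 \<and> seqtype ws \<notin> Pxi L xi (delta2 (length ws))}"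
  have "measure_pmf.prob p ?E
      \<le> measure_pmf.prob (bind_pmf (map_pmf mu_of p) (bernoulli_labels (cc L))) ?E"
    using support cond by (rule measure_pmf_le_bernoulli_mixture[OF L]) simp_all
  also have "\<dots> \<le> eta2"
  proof (rule measure_bind_pmf_le)
    fix mus assume "mus \<in> set_pmf (map_pmf mu_of p)"
    then obtain vs where "vs \<in> set_pmf p" and "mus = mu_of vs" by auto
    then show "measure_pmf.prob (bernoulli_labels (cc L) mus) ?E \<le> eta2"
      using measure_atypical_bernoulli_labels_le[OF L support xi_bound delta] by simp
  qed
  finally show ?thesis .
qed

end
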